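(* Let $k\geqslant 2$ and $m_1,\ldots,m_k\geqslant 2$. Write $S^{m_i}=\{(\mathbf{x}_i,z_i):\mathbf{x}_i\in\mathbb{R}^{m_i-1},\ z_i\in\mathbb{C},\ |\mathbf{x}_i|^2+|z_i|^2=1\}$. Let the torus $T^{k-1}=U(1)^{k-1}$ act on $S^{m_1}\times\cdots\times S^{m_k}$ by \[ (r_1,\ldots,r_{k-1})\cdot((\mathbf{x}_1,z_1),\ldots,(\mathbf{x}_k,z_k))=((\mathbf{x}_1,z_1r_1^{-1}),(\mathbf{x}_2,r_1z_2r_2^{-1}),\ldots,(\mathbf{x}_{k-1},r_{k-2}z_{k-1}r_{k-1}^{-1}),(\mathbf{x}_k,r_{k-1}z_k)). \] Then the orbit space $(S^{m_1}\times\cdots\times S^{m_k})/T^{k-1}$ is homeomorphic to the sphere $S^m$, $m=m_1+\cdots+m_k-(k-1)$, and the canonical projection onto the orbit space is given by \[ ((\mathbf{x}_1,z_1),\ldots,(\mathbf{x}_k,z_k))\mapsto\frac{(\mathbf{x}_1,\ldots,\mathbf{x}_k,z_1z_2\cdots z_k)}{\sqrt{|\mathbf{x}_1|^2+\cdots+|\mathbf{x}_k|^2+|z_1z_2\cdots z_k|^2}}\in S^m\subset\mathbb{R}^{m_1-1}\times\cdots\times\mathbb{R}^{m_k-1}\times\mathbb{C}. \] *)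

theory Defs
  imports "HOL-Analysis.Analysis"
begin

(* R^n as functions {..<n} -> real (extensional), with the product (= Euclidean) topology *)
definition Rvec_top :: "nat \<Rightarrow> (nat \<Rightarrow> real) topology" where
  "Rvec_top n = product_topology (\<lambda>_. euclideanreal) {..<n}"

definition sph_factor :: "nat \<Rightarrow> ((nat \<Rightarrow> real) \<times> complex) topology" where
  "sph_factor n = subtopology (prod_topology (Rvec_top (n - 1)) euclidean)
     {(x, z). x \<in> topspace (Rvec_top (n - 1)) \<and> (\<Sum>j<n - 1. (x j)\<^sup>2) + (cmod z)\<^sup>2 = 1}"

(* S^{m_0} x ... x S^{m_(k-1)} (factors indexed 0..k-1) with the product topology *)
definition sph_product :: "nat \<Rightarrow> (nat \<Rightarrow> nat) \<Rightarrow> (nat \<Rightarrow> (nat \<Rightarrow> real) \<times> complex) topology" where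
  "sph_product k m = product_topology (\<lambda>i. sph_factor (m i)) {..<k}"

definition target_sphere :: "nat \<Rightarrow> (nat \<Rightarrow> nat) \<Rightarrow> ((nat \<Rightarrow> nat \<Rightarrow> real) \<times> complex) topology" where
  "target_sphere k m = subtopology
     (prod_topology (product_topology (\<lambda>i. Rvec_top (m i - 1)) {..<k}) euclidean)
     {(x, w). x \<in> topspace (product_topology (\<lambda>i. Rvec_top (m i - 1)) {..<k}) \<and>
              (\<Sum>i<k. \<Sum>j<m i - 1. (x i j)\<^sup>2) + (cmod w)\<^sup>2 = 1}"

(* the torus T^(k-1) = U(1)^(k-1), coordinates r_0..r_(k-2) *)
definition torus :: "nat \<Rightarrow> (nat \<Rightarrow> complex) set" where
  "torus k = PiE {..<k - 1} (\<lambda>_. sphere 0 1)"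

definition torus_act :: "nat \<Rightarrow> (nat \<Rightarrow> complex) \<Rightarrow> (nat \<Rightarrow> (nat \<Rightarrow> real) \<times> complex)
    \<Rightarrow> (nat \<Rightarrow> (nat \<Rightarrow> real) \<times> complex)" where
  "torus_act k r p = (\<lambda>i\<in>{..<k}. (fst (p i),
      (if i = 0 then 1 else r (i - 1)) * snd (p i) * inverse (if i < k - 1 then r i else 1)))"

definition orbit_proj :: "nat \<Rightarrow> (nat \<Rightarrow> nat) \<Rightarrow> (nat \<Rightarrow> (nat \<Rightarrow> real) \<times> complex)
    \<Rightarrow> (nat \<Rightarrow> nat \<Rightarrow> real) \<times> complex" where
  "orbit_proj k m p =
    (let d = sqrt ((\<Sum>i<k. \<Sum>j<m i - 1. (fst (p i) j)\<^sup>2) + (cmod (\<Prod>i<k. snd (p i)))\<^sup>2)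
     in ((\<lambda>i\<in>{..<k}. \<lambda>j\<in>{..<m i - 1}. fst (p i) j / d),
         (\<Prod>i<k. snd (p i)) / complex_of_real d))"

end

theory Submission
  imports Defs
begin

text \<open>The projection is a continuous surjection from a compact space onto a Hausdorff one, hence
  a quotient map. Write \<open>a\<^sub>i = |x\<^sub>i|\<^sup>2\<close>, so that \<open>|z\<^sub>i|\<^sup>2 = 1 - a\<^sub>i\<close> on the product of spheres.
  Two points with the same image differ by a factor \<open>c > 0\<close> on the \<open>x\<close>-part and on
  \<open>z\<^sub>0\<cdots>z\<^sub>k\<^sub>-\<^sub>1\<close>; taking norms gives \<open>\<Prod>(1 - c\<^sup>2 a\<^sub>i) = c\<^sup>2 \<Prod>(1 - a\<^sub>i)\<close>. For \<open>c > 1\<close> the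
  left side is at most \<open>\<Prod>(1 - a\<^sub>i)\<close>, which is then positive and so smaller than the right side;
  exchanging the two points rules out \<open>c < 1\<close>. Then \<open>z'\<^sub>i = u\<^sub>i z\<^sub>i\<close> with unit
  \<open>u\<^sub>i\<close> and \<open>\<Prod>u\<^sub>i = 1\<close>, which is the action of \<open>r\<^sub>i = (u\<^sub>0\<cdots>u\<^sub>i)\<^sup>-\<^sup>1\<close>. For surjectivity onto
  \<open>(x, w)\<close>, the intermediate value theorem gives \<open>t > 0\<close> with \<open>\<Prod>(1 - t a\<^sub>i) = t |w|\<^sup>2\<close>, and
  \<open>(\<surd>t x\<^sub>i, \<surd>(1 - t a\<^sub>i))\<close>, with the phase of \<open>w\<close> moved into \<open>z\<^sub>0\<close>, is a preimage.\<close>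

lemma continuous_map_prod_algebra:
  fixes f :: "'a \<Rightarrow> 'i \<Rightarrow> 'b::{real_normed_algebra_1,comm_ring_1}"
  shows "finite I \<Longrightarrow> (\<And>i. i \<in> I \<Longrightarrow> continuous_map X euclidean (\<lambda>x. f x i))
    \<Longrightarrow> continuous_map X euclidean (\<lambda>x. prod (f x) I)"
  by (simp add: continuous_map_atin tendsto_prod)

lemma continuous_map_divide_field:
  fixes f g :: "'a \<Rightarrow> 'b::real_normed_field"
  shows "continuous_map X euclidean f \<Longrightarrow> continuous_map X euclidean g
    \<Longrightarrow> (\<And>x. x \<in> topspace X \<Longrightarrow> g x \<noteq> 0) \<Longrightarrow> continuous_map X euclidean (\<lambda>x. f x / g x)"
  by (simp add: continuous_map_atin tendsto_divide)

lemma continuous_map_of_real: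
  "continuous_map X euclideanreal f \<Longrightarrow> continuous_map X euclidean (\<lambda>x. of_real (f x) :: 'b::real_normed_algebra_1)"
  by (simp add: continuous_map_atin tendsto_of_real)

lemma real_sqrt_prod: "sqrt (\<Prod>i\<in>A. f i) = (\<Prod>i\<in>A. sqrt (f i))"
  by (induction A rule: infinite_finite_induct) (simp_all add: real_sqrt_mult)

lemma topspace_sph_product:
  "topspace (sph_product k m) = (\<Pi>\<^sub>E i\<in>{..<k}. {(x, z). x \<in> (\<Pi>\<^sub>E j\<in>{..<m i - 1}. UNIV) \<and>
     (\<Sum>j<m i - 1. (x j)\<^sup>2) + (cmod z)\<^sup>2 = 1})"
  unfolding sph_product_def sph_factor_def Rvec_top_def
  by (simp, rule PiE_cong, auto)

lemma topspace_target_sphere: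
  "topspace (target_sphere k m) = {(x, w). x \<in> (\<Pi>\<^sub>E i\<in>{..<k}. \<Pi>\<^sub>E j\<in>{..<m i - 1}. UNIV) \<and>
     (\<Sum>i<k. \<Sum>j<m i - 1. (x i j)\<^sup>2) + (cmod w)\<^sup>2 = 1}"
  by (auto simp add: target_sphere_def Rvec_top_def)

lemma sph_product_memD:
  assumes "p \<in> topspace (sph_product k m)" "i < k"
  shows "(\<Sum>j<m i - 1. (fst (p i) j)\<^sup>2) + (cmod (snd (p i)))\<^sup>2 = 1"
    and "fst (p i) \<in> (\<Pi>\<^sub>E j\<in>{..<m i - 1}. UNIV)"
  using assms by (auto simp: topspace_sph_product PiE_iff case_prod_unfold)

lemma continuous_map_sph_product_fst:
  assumes "i < k" "j < m i - 1"
  shows "continuous_map (sph_product k m) euclideanreal (\<lambda>p. fst (p i) j)"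
proof -
  have "continuous_map (sph_product k m) (sph_factor (m i)) (\<lambda>p. p i)"
    unfolding sph_product_def by (rule continuous_map_product_projection) (use assms in simp)
  moreover have "continuous_map (sph_factor (m i)) (Rvec_top (m i - 1)) fst"
    unfolding sph_factor_def by (intro continuous_map_from_subtopology continuous_map_fst)
  moreover have "continuous_map (Rvec_top (m i - 1)) euclideanreal (\<lambda>x. x j)"
    unfolding Rvec_top_def by (rule continuous_map_product_projection) (use assms in simp)
  ultimately show ?thesis
    using continuous_map_compose[OF continuous_map_compose] unfolding o_def by blast
qed

lemma continuous_map_sph_product_snd:
  assumes "i < k"
  shows "continuous_map (sph_product k m) euclidean (\<lambda>p. snd (p i))"
proof -
  have "continuous_map (sph_product k m) (sph_factor (m i)) (\<lambda>p. p i)"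
    unfolding sph_product_def by (rule continuous_map_product_projection) (use assms in simp)
  moreover have "continuous_map (sph_factor (m i)) euclidean snd"
    unfolding sph_factor_def by (intro continuous_map_from_subtopology continuous_map_snd)
  ultimately show ?thesis
    using continuous_map_compose by (simp add: o_def)
qed

lemma continuous_map_sphere_equation:
  "continuous_map (prod_topology (Rvec_top n) euclidean) euclideanreal
     (\<lambda>p. (\<Sum>j<n. (fst p j)\<^sup>2) + (cmod (snd p :: complex))\<^sup>2)"
proof -
  have "continuous_map (prod_topology (Rvec_top n) euclidean) euclideanreal (\<lambda>p. fst p j)"
    if "j < n" for j
  proof -
    have "continuous_map (Rvec_top n) euclideanreal (\<lambda>x. x j)"
      unfolding Rvec_top_def by (rule continuous_map_product_projection) (use that in simp)
    then show ?thesis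
      using continuous_map_compose[OF continuous_map_fst] by (simp add: o_def)
  qed
  then show ?thesis
    by (intro continuous_map_add continuous_map_sum continuous_map_real_pow continuous_map_norm
        continuous_map_snd) auto
qed

lemma compact_space_sph_factor: "compact_space (sph_factor n)"
proof -
  define X where "X = prod_topology (Rvec_top (n - 1)) (euclidean :: complex topology)"
  define S where "S = {(x, z). x \<in> topspace (Rvec_top (n - 1)) \<and> (\<Sum>j<n - 1. (x j)\<^sup>2) + (cmod z)\<^sup>2 = 1}"
  define K where "K = (\<Pi>\<^sub>E j\<in>{..<n - 1}. {-1..1::real}) \<times> cball (0::complex) 1"
  have "compactin X K"
    unfolding X_def K_def compactin_Times Rvec_top_def compactin_PiE by auto
  moreover have "S \<subseteq> K"
  proof
    fix p assume "p \<in> S"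
    then obtain x z where p: "p = (x, z)" and x: "x \<in> topspace (Rvec_top (n - 1))"
      and sphere: "(\<Sum>j<n - 1. (x j)\<^sup>2) + (cmod z)\<^sup>2 = 1"
      unfolding S_def by auto
    have "(x j)\<^sup>2 \<le> 1" if "j < n - 1" for j
    proof -
      have "(x j)\<^sup>2 \<le> (\<Sum>j<n - 1. (x j)\<^sup>2)" by (rule member_le_sum) (use that in auto)
      then show ?thesis using sphere by (smt (verit) zero_le_power2)
    qed
    moreover have "(cmod z)\<^sup>2 \<le> 1" using sphere sum_nonneg[of "{..<n - 1}" "\<lambda>j. (x j)\<^sup>2"] by simp
    ultimately show "p \<in> K"
      using x unfolding K_def p Rvec_top_def by (auto simp: PiE_iff abs_le_iff abs_square_le_1)
  qed
  moreover have "closedin X S"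
  proof -
    have "closedin X {p \<in> topspace X. (\<Sum>j<n - 1. (fst p j)\<^sup>2) + (cmod (snd p))\<^sup>2 \<in> {1}}"
      unfolding X_def by (rule closedin_continuous_map_preimage[OF continuous_map_sphere_equation]) simp
    moreover have "{p \<in> topspace X. (\<Sum>j<n - 1. (fst p j)\<^sup>2) + (cmod (snd p))\<^sup>2 \<in> {1}} = S"
      unfolding S_def X_def by auto
    ultimately show ?thesis by simp
  qed
  ultimately have "compactin X S" by (rule closed_compactin)
  then show ?thesis
    unfolding sph_factor_def X_def S_def by (rule compact_space_subtopology)
qed

lemma compact_space_sph_product: "compact_space (sph_product k m)"
  unfolding sph_product_def compact_space_product_topology using compact_space_sph_factor by blast

lemma Hausdorff_space_target_sphere: "Hausdorff_space (target_sphere k m)"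
  unfolding target_sphere_def Rvec_top_def
  by (intro Hausdorff_space_subtopology)
    (simp add: Hausdorff_space_prod_topology Hausdorff_space_product_topology)

definition proj_sq_norm :: "nat \<Rightarrow> (nat \<Rightarrow> nat) \<Rightarrow> (nat \<Rightarrow> (nat \<Rightarrow> real) \<times> complex) \<Rightarrow> real" where
  "proj_sq_norm k m p = (\<Sum>i<k. \<Sum>j<m i - 1. (fst (p i) j)\<^sup>2) + (cmod (\<Prod>i<k. snd (p i)))\<^sup>2"

lemma orbit_proj_eq:
  "orbit_proj k m p = ((\<lambda>i\<in>{..<k}. \<lambda>j\<in>{..<m i - 1}. fst (p i) j / sqrt (proj_sq_norm k m p)),
     (\<Prod>i<k. snd (p i)) / of_real (sqrt (proj_sq_norm k m p)))"
  by (simp add: orbit_proj_def proj_sq_norm_def Let_def)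

lemma proj_sq_norm_pos:
  assumes p: "p \<in> topspace (sph_product k m)"
  shows "proj_sq_norm k m p > 0"
proof (cases "(\<Sum>i<k. \<Sum>j<m i - 1. (fst (p i) j)\<^sup>2) > 0")
  case True
  then show ?thesis unfolding proj_sq_norm_def by (simp add: add_pos_nonneg)
next
  case False
  then have zero: "(\<Sum>i<k. \<Sum>j<m i - 1. (fst (p i) j)\<^sup>2) = 0"
    by (meson not_less order_antisym sum_nonneg zero_le_power2)
  then have "\<forall>i\<in>{..<k}. (\<Sum>j<m i - 1. (fst (p i) j)\<^sup>2) = 0"
    by (simp add: sum_nonneg_eq_0_iff sum_nonneg)
  then have "\<forall>i<k. (cmod (snd (p i)))\<^sup>2 = 1"
    using sph_product_memD(1)[OF p] by simp
  then have "(cmod (\<Prod>i<k. snd (p i)))\<^sup>2 = 1"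
    unfolding prod_norm[symmetric] prod_power_distrib by (auto intro: prod.neutral)
  then show ?thesis
    unfolding proj_sq_norm_def zero by simp
qed

lemma continuous_map_proj_sq_norm: "continuous_map (sph_product k m) euclideanreal (proj_sq_norm k m)"
  unfolding proj_sq_norm_def
  by (intro continuous_map_add continuous_map_sum continuous_map_real_pow continuous_map_norm
      continuous_map_prod_algebra continuous_map_sph_product_snd continuous_map_sph_product_fst
      finite_lessThan) auto

lemma orbit_proj_in_target_sphere:
  assumes "p \<in> topspace (sph_product k m)"
  shows "orbit_proj k m p \<in> topspace (target_sphere k m)"
proof -
  define s where "s = sqrt (proj_sq_norm k m p)"
  have "s > 0" and s2: "s\<^sup>2 = proj_sq_norm k m p"
    using proj_sq_norm_pos[OF assms] by (simp_all add: s_def)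
  from \<open>s > 0\<close> have "(\<Sum>i<k. \<Sum>j<m i - 1. (fst (p i) j / s)\<^sup>2) + (cmod ((\<Prod>i<k. snd (p i)) / of_real s))\<^sup>2
      = proj_sq_norm k m p / s\<^sup>2"
    unfolding proj_sq_norm_def
    by (simp add: sum_divide_distrib power_divide norm_divide add_divide_distrib)
  also have "\<dots> = 1" using \<open>s > 0\<close> by (simp flip: s2)
  finally show ?thesis
    unfolding orbit_proj_eq topspace_target_sphere s_def[symmetric] by auto
qed

lemma continuous_map_orbit_proj: "continuous_map (sph_product k m) (target_sphere k m) (orbit_proj k m)"
proof -
  have norm: "continuous_map (sph_product k m) euclideanreal (\<lambda>p. sqrt (proj_sq_norm k m p))"
    by (intro continuous_map_sqrt continuous_map_proj_sq_norm)
  have nonzero: "\<And>p. p \<in> topspace (sph_product k m) \<Longrightarrow> sqrt (proj_sq_norm k m p) \<noteq> 0"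
    using proj_sq_norm_pos by fastforce
  have "continuous_map (sph_product k m) (product_topology (\<lambda>i. Rvec_top (m i - 1)) {..<k})
     (\<lambda>p. \<lambda>i\<in>{..<k}. \<lambda>j\<in>{..<m i - 1}. fst (p i) j / sqrt (proj_sq_norm k m p))"
    unfolding continuous_map_componentwise Rvec_top_def
    by (auto intro!: continuous_map_real_divide continuous_map_sph_product_fst norm nonzero)
  moreover have "continuous_map (sph_product k m) euclidean
     (\<lambda>p. (\<Prod>i<k. snd (p i)) / of_real (sqrt (proj_sq_norm k m p)) :: complex)"
    using nonzero by (intro continuous_map_divide_field continuous_map_prod_algebra continuous_map_of_real
        norm continuous_map_sph_product_snd) auto
  ultimately have "continuous_map (sph_product k m)
      (prod_topology (product_topology (\<lambda>i. Rvec_top (m i - 1)) {..<k}) euclidean) (orbit_proj k m)"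
    unfolding orbit_proj_eq by (intro continuous_map_pairedI)
  then show ?thesis
    unfolding target_sphere_def continuous_map_in_subtopology
    using orbit_proj_in_target_sphere by (auto simp: target_sphere_def)
qed

lemma orbit_proj_eq_iff_scaled:
  assumes p: "p \<in> topspace (sph_product k m)" and y: "(x, w) \<in> topspace (target_sphere k m)"
  shows "orbit_proj k m p = (x, w) \<longleftrightarrow>
    (\<exists>c>0. (\<forall>i<k. \<forall>j<m i - 1. fst (p i) j = c * x i j) \<and> (\<Prod>i<k. snd (p i)) = of_real c * w)"
proof
  assume proj: "orbit_proj k m p = (x, w)"
  define c where "c = sqrt (proj_sq_norm k m p)"
  have "c > 0" using proj_sq_norm_pos[OF p] by (simp add: c_def)
  have "x = (\<lambda>i\<in>{..<k}. \<lambda>j\<in>{..<m i - 1}. fst (p i) j / c)" and "w = (\<Prod>i<k. snd (p i)) / of_real c"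
    using proj unfolding orbit_proj_eq c_def[symmetric] by auto
  then show "\<exists>c>0. (\<forall>i<k. \<forall>j<m i - 1. fst (p i) j = c * x i j) \<and> (\<Prod>i<k. snd (p i)) = of_real c * w"
    using \<open>c > 0\<close> by (intro exI[of _ c]) auto
next
  assume "\<exists>c>0. (\<forall>i<k. \<forall>j<m i - 1. fst (p i) j = c * x i j) \<and> (\<Prod>i<k. snd (p i)) = of_real c * w"
  then obtain c where "c > 0" and xs: "\<forall>i<k. \<forall>j<m i - 1. fst (p i) j = c * x i j"
    and ws: "(\<Prod>i<k. snd (p i)) = of_real c * w"
    by blast
  have x: "x \<in> (\<Pi>\<^sub>E i\<in>{..<k}. \<Pi>\<^sub>E j\<in>{..<m i - 1}. UNIV)"
    and sphere: "(\<Sum>i<k. \<Sum>j<m i - 1. (x i j)\<^sup>2) + (cmod w)\<^sup>2 = 1"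
    using y unfolding topspace_target_sphere by auto
  have "proj_sq_norm k m p = c\<^sup>2 * ((\<Sum>i<k. \<Sum>j<m i - 1. (x i j)\<^sup>2) + (cmod w)\<^sup>2)"
    unfolding proj_sq_norm_def ws using xs
    by (simp add: distrib_left sum_distrib_left norm_mult power_mult_distrib)
  then have "sqrt (proj_sq_norm k m p) = c"
    using sphere \<open>c > 0\<close> by simp
  moreover have "(\<lambda>i\<in>{..<k}. \<lambda>j\<in>{..<m i - 1}. fst (p i) j / c) = x"
    using x xs \<open>c > 0\<close> by (force simp: PiE_iff extensional_def fun_eq_iff)
  ultimately show "orbit_proj k m p = (x, w)"
    unfolding orbit_proj_eq ws using \<open>c > 0\<close> by simp
qed

lemma prod_one_minus_scaled_less:
  fixes a :: "'i \<Rightarrow> real"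
  assumes "finite A" and a: "\<forall>i\<in>A. 0 \<le> a i" and La: "\<forall>i\<in>A. L * a i \<le> 1" and "L > 1"
  shows "(\<Prod>i\<in>A. 1 - L * a i) < L * (\<Prod>i\<in>A. 1 - a i)"
proof -
  have "(\<Prod>i\<in>A. 1 - L * a i) \<le> (\<Prod>i\<in>A. 1 - a i)"
    using a La \<open>L > 1\<close> by (intro prod_mono) (auto simp: mult_le_cancel_right1)
  moreover have "(\<Prod>i\<in>A. 1 - a i) > 0"
  proof (intro prod_pos ballI)
    fix i assume "i \<in> A"
    then have "a i \<le> L * a i" and "L * a i \<le> 1" and "a i \<noteq> 1"
      using a La \<open>L > 1\<close> by (auto simp: mult_le_cancel_right1)
    then show "1 - a i > 0" by linarith
  qed
  ultimately show ?thesis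
    using \<open>L > 1\<close> by (smt (verit) mult_less_cancel_right1 mult.commute)
qed

lemma prod_one_minus_scaled_eq_imp_eq_one:
  fixes a :: "'i \<Rightarrow> real"
  assumes "finite A" and a: "\<forall>i\<in>A. 0 \<le> a i" "\<forall>i\<in>A. a i \<le> 1" "\<forall>i\<in>A. L * a i \<le> 1" and "L > 0"
    and eq: "(\<Prod>i\<in>A. 1 - L * a i) = L * (\<Prod>i\<in>A. 1 - a i)"
  shows "L = 1"
proof (rule ccontr)
  assume "L \<noteq> 1"
  then consider "L > 1" | "L < 1" by linarith
  then show False
  proof cases
    case 1
    then show False using prod_one_minus_scaled_less[OF \<open>finite A\<close> a(1,3)] eq by simp
  next
    case 2
    have "(\<Prod>i\<in>A. 1 - (1 / L) * (L * a i)) < (1 / L) * (\<Prod>i\<in>A. 1 - L * a i)"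
      using a \<open>L > 0\<close> 2 by (intro prod_one_minus_scaled_less[OF \<open>finite A\<close>]) auto
    then show False using eq \<open>L > 0\<close> by simp
  qed
qed

lemma sph_product_scaling_eq_one:
  assumes p: "p \<in> topspace (sph_product k m)" and q: "q \<in> topspace (sph_product k m)" and "c > 0"
    and xs: "\<forall>i<k. \<forall>j<m i - 1. fst (q i) j = c * fst (p i) j"
    and zs: "(\<Prod>i<k. snd (q i)) = of_real c * (\<Prod>i<k. snd (p i))"
  shows "c = 1"
proof -
  define a where "a i = (\<Sum>j<m i - 1. (fst (p i) j)\<^sup>2)" for i
  have zp: "(cmod (snd (p i)))\<^sup>2 = 1 - a i" if "i < k" for i
    using sph_product_memD(1)[OF p that] by (simp add: a_def)
  have zq: "(cmod (snd (q i)))\<^sup>2 = 1 - c\<^sup>2 * a i" if "i < k" for i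
    using sph_product_memD(1)[OF q that] xs that
    by (simp add: a_def sum_distrib_left power_mult_distrib)
  have "(\<Prod>i<k. 1 - c\<^sup>2 * a i) = (\<Prod>i<k. (cmod (snd (q i)))\<^sup>2)"
    by (rule prod.cong) (simp_all add: zq)
  also have "\<dots> = (cmod (\<Prod>i<k. snd (q i)))\<^sup>2"
    unfolding prod_power_distrib[symmetric] prod_norm ..
  also have "\<dots> = c\<^sup>2 * (cmod (\<Prod>i<k. snd (p i)))\<^sup>2"
    using \<open>c > 0\<close> by (simp add: zs norm_mult power_mult_distrib)
  also have "(cmod (\<Prod>i<k. snd (p i)))\<^sup>2 = (\<Prod>i<k. (cmod (snd (p i)))\<^sup>2)"
    unfolding prod_power_distrib[symmetric] prod_norm ..
  also have "\<dots> = (\<Prod>i<k. 1 - a i)"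
    by (rule prod.cong) (simp_all add: zp)
  finally have "(\<Prod>i<k. 1 - c\<^sup>2 * a i) = c\<^sup>2 * (\<Prod>i<k. 1 - a i)" .
  moreover have "\<forall>i\<in>{..<k}. 0 \<le> a i" "\<forall>i\<in>{..<k}. a i \<le> 1" "\<forall>i\<in>{..<k}. c\<^sup>2 * a i \<le> 1"
    using zp zq by (auto simp: a_def sum_nonneg) (smt (verit) zero_le_power2)+
  ultimately have "c\<^sup>2 = 1"
    using \<open>c > 0\<close> by (intro prod_one_minus_scaled_eq_imp_eq_one[of "{..<k}" a]) auto
  then show "c = 1" using \<open>c > 0\<close> by (simp add: power2_eq_1_iff)
qed

lemma unimodular_factors_exist:
  fixes z w :: "'i \<Rightarrow> complex"
  assumes "finite A" and norms: "\<forall>i\<in>A. cmod (w i) = cmod (z i)" and prods: "(\<Prod>i\<in>A. w i) = (\<Prod>i\<in>A. z i)"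
  shows "\<exists>u. (\<forall>i\<in>A. cmod (u i) = 1 \<and> w i = u i * z i) \<and> (\<Prod>i\<in>A. u i) = 1"
proof -
  define u where "u i = (if z i = 0 then 1 else w i / z i)" for i
  have u: "\<forall>i\<in>A. cmod (u i) = 1 \<and> w i = u i * z i"
    using norms by (auto simp: u_def norm_divide)
  show ?thesis
  proof (cases "\<forall>i\<in>A. z i \<noteq> 0")
    case True
    then have "(\<Prod>i\<in>A. u i) = (\<Prod>i\<in>A. w i) / (\<Prod>i\<in>A. z i)"
      by (simp add: u_def prod_dividef)
    then show ?thesis using u prods True \<open>finite A\<close> by auto
  next
    case False
    then obtain j where j: "j \<in> A" "z j = 0" by auto
    \<comment> \<open>Both sides vanish at \<open>j\<close>, so \<open>u j\<close> is free and can absorb the product of the others.\<close>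
    define u' where "u' = u(j := inverse (\<Prod>i\<in>A - {j}. u i))"
    have "(\<Prod>i\<in>A - {j}. u' i) = (\<Prod>i\<in>A - {j}. u i)"
      by (rule prod.cong) (auto simp: u'_def)
    moreover have "(\<Prod>i\<in>A - {j}. u i) \<noteq> 0"
      using u by (auto simp: prod_zero_iff \<open>finite A\<close>)
    ultimately have "(\<Prod>i\<in>A. u' i) = 1"
      using j \<open>finite A\<close> by (simp add: prod.remove u'_def)
    moreover have "cmod (u' j) = 1"
      using u by (simp add: u'_def norm_inverse flip: prod_norm)
    moreover have "w j = 0" using norms j by auto
    ultimately show ?thesis using u j by (intro exI[of _ u']) (auto simp: u'_def)
  qed
qed

text \<open>Padding \<open>r\<^sub>0, \<dots>, r\<^sub>k\<^sub>-\<^sub>2\<close> by \<open>\<rho>\<^sub>0 = \<rho>\<^sub>k = 1\<close> makes the action multiply \<open>z\<^sub>i\<close> by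
  \<open>\<rho>\<^sub>i / \<rho>\<^sub>i\<^sub>+\<^sub>1\<close>, so the product of all factors telescopes to \<open>1\<close>.\<close>

definition padded_torus_coord :: "nat \<Rightarrow> (nat \<Rightarrow> complex) \<Rightarrow> nat \<Rightarrow> complex" where
  "padded_torus_coord k r n = (if 0 < n \<and> n < k then r (n - 1) else 1)"

lemma torus_act_apply:
  "i < k \<Longrightarrow> torus_act k r p i =
     (fst (p i), padded_torus_coord k r i / padded_torus_coord k r (Suc i) * snd (p i))"
  by (auto simp: torus_act_def padded_torus_coord_def divide_inverse)

lemma padded_torus_coord_nonzero: "r \<in> torus k \<Longrightarrow> padded_torus_coord k r n \<noteq> 0"
  unfolding padded_torus_coord_def torus_def
  by (cases "0 < n \<and> n < k") (auto simp: PiE_iff dest!: bspec[of _ _ "n - 1"])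

lemma orbit_proj_cong:
  assumes "\<forall>i<k. fst (q i) = fst (p i)" and "(\<Prod>i<k. snd (q i)) = (\<Prod>i<k. snd (p i))"
  shows "orbit_proj k m q = orbit_proj k m p"
proof -
  have "proj_sq_norm k m q = proj_sq_norm k m p"
    unfolding proj_sq_norm_def using assms by simp
  then show ?thesis
    unfolding orbit_proj_eq using assms by (auto intro!: restrict_ext)
qed

lemma orbit_proj_torus_act:
  assumes "r \<in> torus k"
  shows "orbit_proj k m (torus_act k r p) = orbit_proj k m p"
proof (rule orbit_proj_cong)
  show "\<forall>i<k. fst (torus_act k r p i) = fst (p i)" by (simp add: torus_act_apply)
  have "(\<Prod>i<k. snd (torus_act k r p i))
      = (\<Prod>i<k. padded_torus_coord k r i / padded_torus_coord k r (Suc i) * snd (p i))"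
    by (rule prod.cong) (simp_all add: torus_act_apply)
  also have "\<dots> = (\<Prod>i<k. padded_torus_coord k r i / padded_torus_coord k r (Suc i)) * (\<Prod>i<k. snd (p i))"
    by (rule prod.distrib)
  also have "(\<Prod>i<k. padded_torus_coord k r i / padded_torus_coord k r (Suc i)) = 1"
    using padded_torus_coord_nonzero[OF assms]
    by (simp add: prod_lessThan_telescope') (simp add: padded_torus_coord_def)
  finally show "(\<Prod>i<k. snd (torus_act k r p i)) = (\<Prod>i<k. snd (p i))"
    by simp
qed

lemma torus_realizes_unimodular_factors:
  fixes u :: "nat \<Rightarrow> complex"
  assumes norms: "\<forall>i<k. cmod (u i) = 1" and prod: "(\<Prod>i<k. u i) = 1"
  shows "\<exists>r\<in>torus k. \<forall>i<k. padded_torus_coord k r i / padded_torus_coord k r (Suc i) = u i"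
proof -
  define P where "P n = (\<Prod>l<n. u l)" for n
  have norm_P: "cmod (P n) = 1" if "n \<le> k" for n
    unfolding P_def prod_norm[symmetric] using norms that by (auto intro!: prod.neutral)
  define r where "r = (\<lambda>i\<in>{..<k - 1}. inverse (P (Suc i)))"
  have "r \<in> torus k"
    unfolding torus_def r_def using norm_P by (auto simp: norm_inverse)
  moreover have padded: "padded_torus_coord k r n = inverse (P n)" if "n \<le> k" for n
  proof (cases "0 < n \<and> n < k")
    case True
    then have "Suc (n - 1) = n" "n - 1 < k - 1" by auto
    with True show ?thesis by (simp add: padded_torus_coord_def r_def)
  next
    case False
    with that have "n = 0 \<or> n = k" by auto
    with False show ?thesis using prod by (auto simp: padded_torus_coord_def P_def)
  qed
  have "padded_torus_coord k r i / padded_torus_coord k r (Suc i) = u i" if "i < k" for i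
  proof -
    have "P i \<noteq> 0" using norm_P[of i] that by auto
    then show ?thesis
      using that by (simp add: padded P_def field_simps)
  qed
  ultimately show ?thesis by blast
qed

lemma orbit_proj_eq_imp_same_fst_prod_snd:
  assumes p: "p \<in> topspace (sph_product k m)" and q: "q \<in> topspace (sph_product k m)"
    and eq: "orbit_proj k m p = orbit_proj k m q"
  shows "\<forall>i<k. fst (q i) = fst (p i)" and "(\<Prod>i<k. snd (q i)) = (\<Prod>i<k. snd (p i))"
proof -
  obtain x w where y: "orbit_proj k m p = (x, w)" by fastforce
  have y_in: "(x, w) \<in> topspace (target_sphere k m)"
    using orbit_proj_in_target_sphere[OF p] y by simp
  obtain cp where "cp > 0" and xp: "\<forall>i<k. \<forall>j<m i - 1. fst (p i) j = cp * x i j"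
    and zp: "(\<Prod>i<k. snd (p i)) = of_real cp * w"
    using y orbit_proj_eq_iff_scaled[OF p y_in] by blast
  obtain cq where "cq > 0" and xq: "\<forall>i<k. \<forall>j<m i - 1. fst (q i) j = cq * x i j"
    and zq: "(\<Prod>i<k. snd (q i)) = of_real cq * w"
    using y eq orbit_proj_eq_iff_scaled[OF q y_in] by auto
  have "cq / cp = 1"
    using \<open>cp > 0\<close> \<open>cq > 0\<close> xp xq zp zq
    by (intro sph_product_scaling_eq_one[OF p q]) (auto simp: field_simps)
  then have "cq = cp" using \<open>cp > 0\<close> by simp
  show "\<forall>i<k. fst (q i) = fst (p i)"
  proof (intro allI impI)
    fix i assume "i < k"
    show "fst (q i) = fst (p i)"
      using PiE_ext[OF sph_product_memD(2)[OF q \<open>i < k\<close>] sph_product_memD(2)[OF p \<open>i < k\<close>]]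
        xp xq \<open>cq = cp\<close> \<open>i < k\<close> by simp
  qed
  show "(\<Prod>i<k. snd (q i)) = (\<Prod>i<k. snd (p i))"
    using zp zq \<open>cq = cp\<close> by simp
qed

lemma orbit_proj_eq_imp_torus_orbit:
  assumes p: "p \<in> topspace (sph_product k m)" and q: "q \<in> topspace (sph_product k m)"
    and eq: "orbit_proj k m p = orbit_proj k m q"
  shows "\<exists>r\<in>torus k. q = torus_act k r p"
proof -
  note fst_eq = orbit_proj_eq_imp_same_fst_prod_snd(1)[OF assms]
  have "cmod (snd (q i)) = cmod (snd (p i))" if "i < k" for i
  proof -
    have "(cmod (snd (q i)))\<^sup>2 = (cmod (snd (p i)))\<^sup>2"
      using sph_product_memD(1)[OF p that] sph_product_memD(1)[OF q that]
      unfolding fst_eq[rule_format, OF that] by linarith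
    then show ?thesis by (simp add: power2_eq_iff_nonneg)
  qed
  then obtain u where u: "\<forall>i\<in>{..<k}. cmod (u i) = 1 \<and> snd (q i) = u i * snd (p i)"
    and "(\<Prod>i<k. u i) = 1"
    using unimodular_factors_exist[of "{..<k}" "\<lambda>i. snd (q i)" "\<lambda>i. snd (p i)"]
      orbit_proj_eq_imp_same_fst_prod_snd(2)[OF assms] by auto
  then obtain r where "r \<in> torus k"
    and r: "\<forall>i<k. padded_torus_coord k r i / padded_torus_coord k r (Suc i) = u i"
    using torus_realizes_unimodular_factors[of k u] by auto
  have "q = torus_act k r p"
  proof (rule extensionalityI)
    show "q \<in> extensional {..<k}" using q by (simp add: topspace_sph_product PiE_iff)
    show "torus_act k r p \<in> extensional {..<k}" by (simp add: torus_act_def)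
    fix i assume "i \<in> {..<k}"
    then have "q i = (fst (p i), u i * snd (p i))"
      using fst_eq u by (simp add: prod_eq_iff)
    also have "\<dots> = torus_act k r p i"
      using \<open>i \<in> {..<k}\<close> r by (simp only: lessThan_iff torus_act_apply)
    finally show "q i = torus_act k r p i" .
  qed
  with \<open>r \<in> torus k\<close> show ?thesis by blast
qed

lemma exists_balancing_scale:
  fixes a :: "'i \<Rightarrow> real"
  assumes "finite A" and a: "\<forall>i\<in>A. 0 \<le> a i" and "0 \<le> b" and sum: "(\<Sum>i\<in>A. a i) + b = 1"
  shows "\<exists>t>0. (\<forall>i\<in>A. t * a i \<le> 1) \<and> (\<Prod>i\<in>A. 1 - t * a i) = t * b"
proof (cases "\<forall>i\<in>A. a i = 0")
  case True
  then show ?thesis using sum by (intro exI[of _ 1]) simp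
next
  case False
  define M where "M = Max (a ` A)"
  have le_M: "a i \<le> M" if "i \<in> A" for i
    unfolding M_def using \<open>finite A\<close> that by simp
  have "M \<in> a ` A"
    unfolding M_def using False \<open>finite A\<close> by (intro Max_in) auto
  then obtain i0 where "i0 \<in> A" "a i0 = M" by (metis imageE)
  have "M > 0"
  proof -
    obtain i where "i \<in> A" "a i \<noteq> 0" using False by blast
    then show ?thesis using a le_M[of i] by force
  qed
  have bounded: "t * a i \<le> 1" if "0 \<le> t" "t \<le> 1 / M" "i \<in> A" for t i
  proof -
    have "t * a i \<le> (1 / M) * M"
      using that a le_M[OF \<open>i \<in> A\<close>] \<open>M > 0\<close> by (intro mult_mono) auto
    then show ?thesis using \<open>M > 0\<close> by simp
  qed
  define f where "f t = (\<Prod>i\<in>A. 1 - t * a i) - t * b" for t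
  have "(\<Prod>i\<in>A. 1 - (1 / M) * a i) = 0"
    using \<open>i0 \<in> A\<close> \<open>a i0 = M\<close> \<open>M > 0\<close> \<open>finite A\<close> by (intro prod_zero) auto
  then have "f (1 / M) \<le> 0"
    using \<open>M > 0\<close> \<open>0 \<le> b\<close> by (simp add: f_def)
  moreover have "f 0 = 1" by (simp add: f_def)
  moreover have "continuous_on {0..1 / M} f"
    unfolding f_def by (intro continuous_intros)
  ultimately obtain t where "0 \<le> t" "t \<le> 1 / M" "f t = 0"
    using IVT2'[of f "1 / M" 0 0] \<open>M > 0\<close> by auto
  moreover have "t \<noteq> 0" using \<open>f t = 0\<close> \<open>f 0 = 1\<close> by auto
  ultimately show ?thesis
    using bounded by (intro exI[of _ t]) (auto simp: f_def)
qed

lemma orbit_proj_surjective: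
  assumes "0 < k" and y: "(x, w) \<in> topspace (target_sphere k m)"
  shows "\<exists>p\<in>topspace (sph_product k m). orbit_proj k m p = (x, w)"
proof -
  define a where "a i = (\<Sum>j<m i - 1. (x i j)\<^sup>2)" for i
  have "(\<Sum>i<k. a i) + (cmod w)\<^sup>2 = 1"
    using y by (simp add: topspace_target_sphere a_def)
  then obtain t where "t > 0" and bounded: "\<forall>i<k. t * a i \<le> 1"
    and balanced: "(\<Prod>i<k. 1 - t * a i) = t * (cmod w)\<^sup>2"
    using exists_balancing_scale[of "{..<k}" a "(cmod w)\<^sup>2"] by (auto simp: a_def sum_nonneg)
  define c where "c = sqrt t"
  define phase where "phase = (if w = 0 then 1 else w / of_real (cmod w))"
  define z where "z i = of_real (sqrt (1 - t * a i)) * (if i = 0 then phase else 1)" for i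
  define p where "p = (\<lambda>i\<in>{..<k}. ((\<lambda>j\<in>{..<m i - 1}. c * x i j), z i))"
  have "c > 0" using \<open>t > 0\<close> by (simp add: c_def)
  have "cmod phase = 1" by (simp add: phase_def norm_divide)
  have "p \<in> topspace (sph_product k m)"
  proof -
    have "(\<Sum>j<m i - 1. (c * x i j)\<^sup>2) + (cmod (z i))\<^sup>2 = 1" if "i < k" for i
      using bounded that \<open>t > 0\<close> \<open>cmod phase = 1\<close>
      by (simp add: c_def z_def a_def norm_mult power_mult_distrib sum_distrib_left)
    then show ?thesis by (auto simp: topspace_sph_product p_def)
  qed
  moreover have "(\<Prod>i<k. snd (p i)) = of_real c * w"
  proof -
    have "(\<Prod>i<k. snd (p i)) = of_real (\<Prod>i<k. sqrt (1 - t * a i)) * phase"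
      using \<open>0 < k\<close> by (simp add: p_def z_def prod.distrib prod.delta)
    also have "(\<Prod>i<k. sqrt (1 - t * a i)) = c * cmod w"
      by (simp add: balanced c_def real_sqrt_mult flip: real_sqrt_prod)
    finally show ?thesis by (simp add: phase_def)
  qed
  moreover have "\<forall>i<k. \<forall>j<m i - 1. fst (p i) j = c * x i j"
    by (simp add: p_def)
  ultimately show ?thesis
    using orbit_proj_eq_iff_scaled[OF _ y] \<open>c > 0\<close> by blast
qed

lemma orbit_proj_image:
  assumes "0 < k"
  shows "orbit_proj k m ` topspace (sph_product k m) = topspace (target_sphere k m)"
proof
  show "orbit_proj k m ` topspace (sph_product k m) \<subseteq> topspace (target_sphere k m)"
    using orbit_proj_in_target_sphere by blast
  show "topspace (target_sphere k m) \<subseteq> orbit_proj k m ` topspace (sph_product k m)"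
  proof
    fix y assume "y \<in> topspace (target_sphere k m)"
    moreover obtain x w where "y = (x, w)" by fastforce
    ultimately show "y \<in> orbit_proj k m ` topspace (sph_product k m)"
      using orbit_proj_surjective[OF assms] by (metis imageI)
  qed
qed

theorem theorem2:
  fixes k :: nat and m :: "nat \<Rightarrow> nat"
  assumes "k \<ge> 2" and "\<forall>i<k. m i \<ge> 2"
  shows "quotient_map (sph_product k m) (target_sphere k m) (orbit_proj k m) \<and>
         (\<forall>p\<in>topspace (sph_product k m). \<forall>q\<in>topspace (sph_product k m).
            orbit_proj k m p = orbit_proj k m q \<longleftrightarrow> (\<exists>r\<in>torus k. q = torus_act k r p))"
proof (intro conjI ballI)
  show "quotient_map (sph_product k m) (target_sphere k m) (orbit_proj k m)"
    using orbit_proj_image \<open>k \<ge> 2\<close>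
    by (intro continuous_imp_quotient_map continuous_map_orbit_proj compact_space_sph_product
        Hausdorff_space_target_sphere) auto
  fix p q assume "p \<in> topspace (sph_product k m)" "q \<in> topspace (sph_product k m)"
  then show "orbit_proj k m p = orbit_proj k m q \<longleftrightarrow> (\<exists>r\<in>torus k. q = torus_act k r p)"
    using orbit_proj_eq_imp_torus_orbit orbit_proj_torus_act by auto
qed

end
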